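(* For every integer $n\ge 2$, $\theta_{n-1}(\ell_\infty,\ell_\infty)=\sqrt{n}^{\,n}$, i.e. $\max\{\|C_{n-1}(B)\|_\infty : B\in\mathbb{C}^{n\times n},\ \|\mathrm{col}_i(B)\|_\infty=1,\ i=1,\ldots,n\}=n^{n/2}$.
   Context: $C_k(B)$ is the $k$th compound of $B$: the $\binom nk\times\binom nk$ matrix of all $k\times k$ minors $\det B(\alpha|\beta)$, indexed by $k$-subsets of $\{1,\ldots,n\}$. $\mathrm{col}_i(B)$ is the $i$th column. $\|\cdot\|_\infty$ is the max-modulus vector norm and, for matrices, the induced operator norm (maximum absolute row sum). $\theta_k(\mu,\nu)=\max\{\mu(C_k(B)): \nu(\mathrm{col}_i(B))=1\ \forall i\}$. *)

theory Defs
  imports "Jordan_Normal_Form.Determinant" "Jordan_Normal_Form.DL_Submatrix"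
begin

definition ksubsets :: "nat \<Rightarrow> nat \<Rightarrow> nat set set" where
  "ksubsets n k = {S. S \<subseteq> {0..<n} \<and> card S = k}"

text \<open>Entry (alpha, beta) of the k-th compound: the minor det B(alpha|beta)
  (rows/columns taken in increasing order).\<close>
definition compound_entry :: "complex mat \<Rightarrow> nat set \<Rightarrow> nat set \<Rightarrow> complex" where
  "compound_entry B \<alpha> \<beta> = det (submatrix B \<alpha> \<beta>)"

text \<open>Induced infinity-norm (maximum absolute row sum) of the k-th compound C_k(B)
  of an n x n matrix B; rows and columns of C_k(B) indexed by k-subsets.\<close>
definition compound_inf_norm :: "nat \<Rightarrow> complex mat \<Rightarrow> real" where
  "compound_inf_norm k B =
     Max ((\<lambda>\<alpha>. \<Sum>\<beta>\<in>ksubsets (dim_row B) k. cmod (compound_entry B \<alpha> \<beta>))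
          ` ksubsets (dim_row B) k)"

definition col_inf_norm :: "complex mat \<Rightarrow> nat \<Rightarrow> real" where
  "col_inf_norm B i = Max ((\<lambda>j. cmod (B $$ (j, i))) ` {0..<dim_row B})"

text \<open>The set whose maximum is theta_k(l_inf, l_inf) for n x n matrices.\<close>
definition theta_inf_set :: "nat \<Rightarrow> nat \<Rightarrow> real set" where
  "theta_inf_set n k = {compound_inf_norm k B | B.
      B \<in> carrier_mat n n \<and> (\<forall>i<n. col_inf_norm B i = 1)}"

end

theory Submission
  imports Defs
begin

text \<open>The row of C_(n-1)(B) indexed by the complement of i consists of the (i, j) minors of B.
  Replacing row i of B by the conjugate phases of its cofactors gives a matrix with entries of
  modulus at most 1 whose determinant, by Laplace expansion along row i, is the absolute row sum
  of those minors; Hadamard's inequality bounds it by n^(n/2). The Fourier matrix attains the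
  bound: its rows are orthogonal of squared length n, so |det F| = n^(n/2), and by the triangle
  inequality in the same Laplace expansion every row sum of minors of F is at least |det F|.\<close>

definition row_inner :: "complex mat \<Rightarrow> nat \<Rightarrow> nat \<Rightarrow> complex" where
  "row_inner M i j = (\<Sum>k<dim_col M. M $$ (i,k) * cnj (M $$ (j,k)))"

definition row_sqnorm :: "complex mat \<Rightarrow> nat \<Rightarrow> real" where
  "row_sqnorm M i = (\<Sum>k<dim_col M. (cmod (M $$ (i,k)))\<^sup>2)"

lemma row_inner_self: "row_inner M i i = of_real (row_sqnorm M i)"
  unfolding row_inner_def row_sqnorm_def of_real_sum complex_norm_square by (rule refl)

lemma row_inner_commute: "row_inner M j i = cnj (row_inner M i j)"
  unfolding row_inner_def by (simp add: cnj_sum mult.commute)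

lemma row_sqnorm_nonneg: "row_sqnorm M i \<ge> 0"
  unfolding row_sqnorm_def by (simp add: sum_nonneg)

lemma row_inner_eq_0_if_row_sqnorm_eq_0:
  assumes "row_sqnorm M j = 0"
  shows "row_inner M i j = 0"
proof -
  have "\<forall>k\<in>{..<dim_col M}. (cmod (M $$ (j,k)))\<^sup>2 = 0"
    using assms unfolding row_sqnorm_def by (subst sum_nonneg_eq_0_iff[symmetric]) auto
  then show ?thesis unfolding row_inner_def by simp
qed

lemma sum_cmod_sq_add_orthogonal:
  assumes "(\<Sum>k\<in>K. v k * cnj (u k)) = 0"
  shows "(\<Sum>k\<in>K. (cmod (v k + u k))\<^sup>2) = (\<Sum>k\<in>K. (cmod (v k))\<^sup>2) + (\<Sum>k\<in>K. (cmod (u k))\<^sup>2)"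
proof -
  have "(cmod (a + b))\<^sup>2 = (cmod a)\<^sup>2 + (cmod b)\<^sup>2 + 2 * Re (a * cnj b)" for a b
    unfolding cmod_power2 by (simp add: power2_eq_square algebra_simps)
  then have "(\<Sum>k\<in>K. (cmod (v k + u k))\<^sup>2)
      = (\<Sum>k\<in>K. (cmod (v k))\<^sup>2) + (\<Sum>k\<in>K. (cmod (u k))\<^sup>2) + 2 * Re (\<Sum>k\<in>K. v k * cnj (u k))"
    by (simp add: sum.distrib sum_distrib_left Re_sum)
  with assms show ?thesis by simp
qed

definition add_row_combination ::
    "complex mat \<Rightarrow> nat \<Rightarrow> (nat \<Rightarrow> complex) \<Rightarrow> nat set \<Rightarrow> complex mat" where
  "add_row_combination M m c J = mat (dim_row M) (dim_col M)
     (\<lambda>(i,k). if i = m then M $$ (m,k) + (\<Sum>j\<in>J. c j * M $$ (j,k)) else M $$ (i,k))"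

lemma add_row_combination_carrier [simp]:
  "M \<in> carrier_mat n n \<Longrightarrow> add_row_combination M m c J \<in> carrier_mat n n"
  unfolding add_row_combination_def by simp

lemma det_add_row_combination:
  assumes M: "M \<in> carrier_mat n n" and "m < n"
    and J: "finite J" "m \<notin> J" "J \<subseteq> {..<n}"
  shows "det (add_row_combination M m c J) = det M"
  using J
proof (induction J rule: finite_induct)
  case empty
  have "add_row_combination M m c {} = M"
    using M unfolding add_row_combination_def by (intro eq_matI) auto
  then show ?case by simp
next
  case (insert j J)
  then have "j < n" "j \<noteq> m" by auto
  have "add_row_combination M m c (insert j J) = addrow (c j) m j (add_row_combination M m c J)"
    using M insert(1,2) \<open>j < n\<close> \<open>j \<noteq> m\<close> unfolding add_row_combination_def mat_addrow_gen_def
    by (intro eq_matI) (auto simp: algebra_simps)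
  also have "det \<dots> = det (add_row_combination M m c J)"
    using \<open>j \<noteq> m\<close> by (intro det_addrow[OF \<open>j < n\<close>]) (auto simp: M)
  finally show ?case using insert by simp
qed

lemma add_row_combination_other_row:
  assumes "M \<in> carrier_mat n n" "i \<noteq> m" "i < n" "k < n"
  shows "add_row_combination M m c J $$ (i,k) = M $$ (i,k)"
  using assms unfolding add_row_combination_def by simp

lemma row_inner_add_row_combination:
  assumes M: "M \<in> carrier_mat n n" and "m < n" "j < n" "j \<noteq> m"
  shows "row_inner (add_row_combination M m c J) m j
         = row_inner M m j + (\<Sum>l\<in>J. c l * row_inner M l j)"
proof -
  have "row_inner (add_row_combination M m c J) m j
        = (\<Sum>k<n. (M $$ (m,k) + (\<Sum>l\<in>J. c l * M $$ (l,k))) * cnj (M $$ (j,k)))"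
    using assms unfolding row_inner_def add_row_combination_def by (intro sum.cong) auto
  also have "\<dots> = row_inner M m j + (\<Sum>l\<in>J. c l * row_inner M l j)"
    using M unfolding row_inner_def
    by (simp add: distrib_right sum.distrib sum_distrib_left sum_distrib_right mult.assoc
        sum.swap[of _ J])
  finally show ?thesis .
qed

lemma row_sqnorm_add_row_combination_le:
  assumes M: "M \<in> carrier_mat n n" and "m < n" and J: "m \<notin> J" "J \<subseteq> {..<n}"
    and orth: "\<And>l. l \<in> J \<Longrightarrow> row_inner (add_row_combination M m c J) m l = 0"
  shows "row_sqnorm (add_row_combination M m c J) m \<le> row_sqnorm M m"
proof -
  let ?M' = "add_row_combination M m c J"
  define v where "v k = ?M' $$ (m,k)" for k
  define u where "u k = - (\<Sum>l\<in>J. c l * M $$ (l,k))" for k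
  have rows_J: "?M' $$ (l,k) = M $$ (l,k)" if "l \<in> J" "k < n" for l k
    using J that by (intro add_row_combination_other_row[OF M]) auto
  have M'_dim: "dim_col ?M' = n" using M by (simp add: add_row_combination_def)
  have "(\<Sum>k<n. v k * cnj (u k)) = - (\<Sum>k<n. \<Sum>l\<in>J. cnj (c l) * (v k * cnj (?M' $$ (l,k))))"
    unfolding u_def cnj_sum using rows_J
    by (auto simp: sum_distrib_left sum_negf algebra_simps intro!: sum.cong)
  also have "\<dots> = - (\<Sum>l\<in>J. cnj (c l) * row_inner ?M' m l)"
    unfolding row_inner_def M'_dim v_def by (simp add: sum.swap[of _ "{..<n}"] sum_distrib_left)
  also have "\<dots> = 0" using orth by simp
  finally have "(\<Sum>k<n. v k * cnj (u k)) = 0" .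
  moreover have "M $$ (m,k) = v k + u k" if "k < n" for k
    using M \<open>m < n\<close> that unfolding v_def u_def add_row_combination_def by simp
  ultimately have "row_sqnorm M m = row_sqnorm ?M' m + (\<Sum>k<n. (cmod (u k))\<^sup>2)"
    using M sum_cmod_sq_add_orthogonal[of v u "{..<n}"]
    unfolding row_sqnorm_def v_def M'_dim by simp
  then show ?thesis by (simp add: sum_nonneg)
qed

lemma orthogonalize_row:
  assumes M: "M \<in> carrier_mat n n" and "m < n"
    and orth: "\<And>i j. i < m \<Longrightarrow> j < m \<Longrightarrow> i \<noteq> j \<Longrightarrow> row_inner M i j = 0"
  obtains M' where "M' \<in> carrier_mat n n" "det M' = det M"
    "\<And>i j. i < Suc m \<Longrightarrow> j < Suc m \<Longrightarrow> i \<noteq> j \<Longrightarrow> row_inner M' i j = 0"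
    "\<And>i. i < n \<Longrightarrow> row_sqnorm M' i \<le> row_sqnorm M i"
proof
  define c where
    "c j = (if row_sqnorm M j = 0 then 0 else - row_inner M m j / of_real (row_sqnorm M j))" for j
  let ?M' = "add_row_combination M m c {..<m}"
  have dims: "dim_col M = n" "dim_col ?M' = n"
    using M by (auto simp: add_row_combination_def)
  have unchanged: "?M' $$ (i,k) = M $$ (i,k)" if "i \<noteq> m" "i < n" "k < n" for i k
    using add_row_combination_other_row[OF M that] .
  have new_row: "row_inner ?M' m j = 0" if "j < m" for j
  proof -
    have "(\<Sum>l<m. c l * row_inner M l j)
          = c j * row_inner M j j + (\<Sum>l\<in>{..<m}-{j}. c l * row_inner M l j)"
      using \<open>j < m\<close> by (simp add: sum.remove)
    also have "(\<Sum>l\<in>{..<m}-{j}. c l * row_inner M l j) = 0"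
      using orth \<open>j < m\<close> by (intro sum.neutral) auto
    finally have "(\<Sum>l<m. c l * row_inner M l j) = c j * row_inner M j j" by simp
    then have "row_inner ?M' m j = row_inner M m j + c j * row_inner M j j"
      using row_inner_add_row_combination[OF M \<open>m < n\<close>] \<open>j < m\<close> \<open>m < n\<close> by simp
    also have "\<dots> = 0"
      using row_inner_eq_0_if_row_sqnorm_eq_0[of M j m] by (auto simp: c_def row_inner_self)
    finally show ?thesis .
  qed
  have old_rows: "row_inner ?M' i j = row_inner M i j" if "i \<noteq> m" "j \<noteq> m" "i < n" "j < n" for i j
    unfolding row_inner_def dims using unchanged that by simp
  show "?M' \<in> carrier_mat n n" using M by simp
  show "det ?M' = det M" using det_add_row_combination[OF M \<open>m < n\<close>] \<open>m < n\<close> by simp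
  show "row_inner ?M' i j = 0" if "i < Suc m" "j < Suc m" "i \<noteq> j" for i j
    using that new_row[of i] new_row[of j] row_inner_commute[of ?M' i j] old_rows[of i j] orth[of i j]
      \<open>m < n\<close> by (cases "i = m"; cases "j = m") auto
  show "row_sqnorm ?M' i \<le> row_sqnorm M i" if "i < n" for i
  proof (cases "i = m")
    case True
    have "row_sqnorm ?M' m \<le> row_sqnorm M m"
      using \<open>m < n\<close> new_row by (intro row_sqnorm_add_row_combination_le[OF M \<open>m < n\<close>]) auto
    then show ?thesis using True by simp
  next
    case False
    then show ?thesis unfolding row_sqnorm_def dims using unchanged \<open>i < n\<close> by simp
  qed
qed

lemma exists_orthogonal_rows:
  assumes A: "A \<in> carrier_mat n n" and "m \<le> n"
  obtains M where "M \<in> carrier_mat n n" "det M = det A"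
    "\<And>i j. i < m \<Longrightarrow> j < m \<Longrightarrow> i \<noteq> j \<Longrightarrow> row_inner M i j = 0"
    "\<And>i. i < n \<Longrightarrow> row_sqnorm M i \<le> row_sqnorm A i"
  using \<open>m \<le> n\<close>
proof (induction m arbitrary: thesis)
  case 0
  show ?case using A by (intro "0.prems"(1)[of A]) auto
next
  case (Suc m)
  obtain M where M: "M \<in> carrier_mat n n" "det M = det A"
    "\<And>i j. i < m \<Longrightarrow> j < m \<Longrightarrow> i \<noteq> j \<Longrightarrow> row_inner M i j = 0"
    "\<And>i. i < n \<Longrightarrow> row_sqnorm M i \<le> row_sqnorm A i"
    using Suc.IH Suc.prems(2) by auto
  have "m < n" using Suc.prems(2) by simp
  from orthogonalize_row[OF M(1) this M(3)] obtain M' where "M' \<in> carrier_mat n n" "det M' = det M"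
    "\<And>i j. i < Suc m \<Longrightarrow> j < Suc m \<Longrightarrow> i \<noteq> j \<Longrightarrow> row_inner M' i j = 0"
    "\<And>i. i < n \<Longrightarrow> row_sqnorm M' i \<le> row_sqnorm M i"
    by blast
  then show ?case using M by (intro Suc.prems(1)[of M']) (auto intro: order_trans)
qed

interpretation cnj_hom: comm_ring_hom cnj
  by unfold_locales auto

lemma cmod_det_sq_orthogonal_rows:
  assumes M: "M \<in> carrier_mat n n"
    and orth: "\<And>i j. i < n \<Longrightarrow> j < n \<Longrightarrow> i \<noteq> j \<Longrightarrow> row_inner M i j = 0"
  shows "(cmod (det M))\<^sup>2 = (\<Prod>i<n. row_sqnorm M i)"
proof -
  define M\<^sub>H where "M\<^sub>H = transpose_mat (map_mat cnj M)"
  have M\<^sub>H: "M\<^sub>H \<in> carrier_mat n n" using M unfolding M\<^sub>H_def by auto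
  have "det M\<^sub>H = cnj (det M)"
    using det_transpose[of "map_mat cnj M" n] M unfolding M\<^sub>H_def by (simp add: cnj_hom.hom_det)
  have gram: "M * M\<^sub>H = mat n n (\<lambda>(i,j). row_inner M i j)"
    using M unfolding M\<^sub>H_def row_inner_def
    by (intro eq_matI) (auto simp: scalar_prod_def atLeast0LessThan)
  have "upper_triangular (M * M\<^sub>H)"
    unfolding gram upper_triangular_def using orth by auto
  then have "det (M * M\<^sub>H) = prod_list (diag_mat (M * M\<^sub>H))"
    using M M\<^sub>H by (intro det_upper_triangular) auto
  also have "\<dots> = (\<Prod>i<n. row_inner M i i)"
    unfolding gram diag_mat_def
    by (simp add: prod.distinct_set_conv_list[symmetric] atLeast0LessThan)
  finally have "det M * cnj (det M) = of_real (\<Prod>i<n. row_sqnorm M i)"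
    using det_mult[OF M M\<^sub>H] \<open>det M\<^sub>H = cnj (det M)\<close> by (simp add: row_inner_self)
  then have "of_real ((cmod (det M))\<^sup>2) = (of_real (\<Prod>i<n. row_sqnorm M i) :: complex)"
    by (simp only: complex_norm_square)
  then show ?thesis by (rule of_real_eq_iff[THEN iffD1])
qed

theorem hadamard_inequality:
  assumes A: "A \<in> carrier_mat n n"
  shows "(cmod (det A))\<^sup>2 \<le> (\<Prod>i<n. row_sqnorm A i)"
proof -
  obtain M where "M \<in> carrier_mat n n" "det M = det A"
    "\<And>i j. i < n \<Longrightarrow> j < n \<Longrightarrow> i \<noteq> j \<Longrightarrow> row_inner M i j = 0"
    and le: "\<And>i. i < n \<Longrightarrow> row_sqnorm M i \<le> row_sqnorm A i"
    using exists_orthogonal_rows[OF A order_refl] by metis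
  then have "(cmod (det A))\<^sup>2 = (\<Prod>i<n. row_sqnorm M i)"
    using cmod_det_sq_orthogonal_rows by metis
  also have "\<dots> \<le> (\<Prod>i<n. row_sqnorm A i)"
    using le by (intro prod_mono) (auto simp: row_sqnorm_nonneg)
  finally show ?thesis .
qed

lemma cmod_det_le_if_entries_le_1:
  assumes A: "A \<in> carrier_mat n n"
    and entries: "\<And>i k. i < n \<Longrightarrow> k < n \<Longrightarrow> cmod (A $$ (i,k)) \<le> 1"
  shows "cmod (det A) \<le> sqrt (real n) ^ n"
proof -
  have "row_sqnorm A i \<le> real n" if "i < n" for i
  proof -
    have "row_sqnorm A i \<le> (\<Sum>k<n. 1)"
      using A that entries unfolding row_sqnorm_def
      by (subst carrier_matD(2)[OF A]) (intro sum_mono, simp add: power_le_one)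
    then show ?thesis by simp
  qed
  then have "(cmod (det A))\<^sup>2 \<le> real n ^ n"
    using hadamard_inequality[OF A] prod_mono[of "{..<n}" "row_sqnorm A" "\<lambda>_. real n"]
    by (simp add: row_sqnorm_nonneg)
  also have "\<dots> = ((sqrt (real n))\<^sup>2) ^ n" by simp
  also have "\<dots> = (sqrt (real n) ^ n)\<^sup>2" by (metis power_mult mult.commute)
  finally show ?thesis by (rule power2_le_imp_le) simp
qed

lemma inj_on_Diff_singleton: "B \<subseteq> A \<Longrightarrow> inj_on (\<lambda>i. A - {i}) B"
  unfolding inj_on_def by blast

lemma ksubsets_card_pred:
  assumes "n \<ge> 1"
  shows "ksubsets n (n - 1) = (\<lambda>i. {0..<n} - {i}) ` {..<n}"
proof
  show "(\<lambda>i. {0..<n} - {i}) ` {..<n} \<subseteq> ksubsets n (n - 1)"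
    unfolding ksubsets_def by auto
  show "ksubsets n (n - 1) \<subseteq> (\<lambda>i. {0..<n} - {i}) ` {..<n}"
  proof
    fix S assume "S \<in> ksubsets n (n - 1)"
    then have S: "S \<subseteq> {0..<n}" "card S = n - 1" unfolding ksubsets_def by auto
    then have "card ({0..<n} - S) = 1" using assms by (simp add: card_Diff_subset finite_subset)
    then obtain i where i: "{0..<n} - S = {i}" by (rule card_1_singletonE)
    then have "i < n" "S = {0..<n} - {i}" using S by auto
    then show "S \<in> (\<lambda>i. {0..<n} - {i}) ` {..<n}" by auto
  qed
qed

lemma pick_Diff_singleton:
  assumes "i < n" "k < n - 1"
  shows "pick ({0..<n} - {i}) k = insert_index i k"
proof -
  have "insert_index i k \<in> {0..<n} - {i}" using assms by (auto simp: insert_index_def)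
  moreover have "card {a \<in> {0..<n} - {i}. a < insert_index i k} = k"
  proof (cases "k < i")
    case True
    then have "{a \<in> {0..<n} - {i}. a < insert_index i k} = {0..<k}"
      using assms by (auto simp: insert_index_def)
    then show ?thesis by simp
  next
    case False
    then have "{a \<in> {0..<n} - {i}. a < insert_index i k} = {0..<Suc k} - {i}"
      using assms by (auto simp: insert_index_def)
    then show ?thesis using False by simp
  qed
  ultimately show ?thesis using pick_card_in_set by metis
qed

lemma submatrix_Diff_singleton:
  assumes B: "B \<in> carrier_mat n n" and "i < n" "j < n"
  shows "submatrix B ({0..<n} - {i}) ({0..<n} - {j}) = mat_delete B i j"
proof -
  have card: "card {r. r < n \<and> r \<noteq> x} = n - 1" if "x < n" for x
  proof -
    have "{r. r < n \<and> r \<noteq> x} = {0..<n} - {x}" by auto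
    then show ?thesis using that by simp
  qed
  show ?thesis
    using B assms pick_Diff_singleton[of i n] pick_Diff_singleton[of j n]
    unfolding submatrix_def mat_delete_def
    by (intro eq_matI) (auto simp: card insert_index_def)
qed

definition minor_row_sum :: "complex mat \<Rightarrow> nat \<Rightarrow> real" where
  "minor_row_sum B i = (\<Sum>j<dim_row B. cmod (det (mat_delete B i j)))"

lemma compound_inf_norm_pred:
  assumes B: "B \<in> carrier_mat n n" and "n \<ge> 1"
  shows "compound_inf_norm (n - 1) B = Max (minor_row_sum B ` {..<n})"
proof -
  let ?K = "(\<lambda>i. {0..<n} - {i}) ` {..<n}"
  have inj: "inj_on (\<lambda>i. {0..<n} - {i}) {..<n}"
    by (rule inj_on_Diff_singleton) auto
  have "(\<Sum>\<beta>\<in>?K. cmod (compound_entry B ({0..<n} - {i}) \<beta>)) = minor_row_sum B i" if "i < n" for i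
    using B that inj unfolding minor_row_sum_def compound_entry_def
    by (subst sum.reindex) (auto simp: submatrix_Diff_singleton)
  then have "(\<lambda>\<alpha>. \<Sum>\<beta>\<in>?K. cmod (compound_entry B \<alpha> \<beta>)) ` ?K = minor_row_sum B ` {..<n}"
    unfolding image_image by (intro image_cong) auto
  then show ?thesis
    unfolding compound_inf_norm_def carrier_matD(1)[OF B] ksubsets_card_pred[OF \<open>n \<ge> 1\<close>]
    by simp
qed

lemma cmod_cofactor: "cmod (cofactor A i j) = cmod (det (mat_delete A i j))"
  unfolding cofactor_def by (simp add: norm_mult norm_power)

lemma cmod_det_le_minor_row_sum:
  assumes B: "B \<in> carrier_mat n n" and "i < n"
    and row: "\<And>k. k < n \<Longrightarrow> cmod (B $$ (i,k)) \<le> 1"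
  shows "cmod (det B) \<le> minor_row_sum B i"
proof -
  have "cmod (det B) = cmod (\<Sum>k<n. B $$ (i,k) * cofactor B i k)"
    by (simp add: laplace_expansion_row[OF B \<open>i < n\<close>])
  also have "\<dots> \<le> (\<Sum>k<n. cmod (B $$ (i,k)) * cmod (cofactor B i k))"
    by (rule order_trans[OF norm_sum]) (simp add: norm_mult)
  also have "\<dots> \<le> (\<Sum>k<n. cmod (cofactor B i k))"
    using row by (intro sum_mono mult_left_le_one_le) auto
  finally show ?thesis using B by (simp add: minor_row_sum_def cmod_cofactor)
qed

lemma minor_row_sum_le:
  assumes B: "B \<in> carrier_mat n n" and "i < n"
    and entries: "\<And>r k. r < n \<Longrightarrow> k < n \<Longrightarrow> r \<noteq> i \<Longrightarrow> cmod (B $$ (r,k)) \<le> 1"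
  shows "minor_row_sum B i \<le> sqrt (real n) ^ n"
proof -
  define z where "z k = (if cofactor B i k = 0 then 1 else cnj (sgn (cofactor B i k)))" for k
  define B' where "B' = mat n n (\<lambda>(r,k). if r = i then z k else B $$ (r,k))"
  have B': "B' \<in> carrier_mat n n" unfolding B'_def by simp
  have "mat_delete B' i k = mat_delete B i k" for k
    using B unfolding B'_def mat_delete_def by (intro eq_matI) auto
  then have cofactor_B': "cofactor B' i k = cofactor B i k" for k
    unfolding cofactor_def by simp
  have phase: "z k * cofactor B i k = of_real (cmod (cofactor B i k))" for k
    unfolding z_def by (simp add: complex_sgn_def scaleR_conv_of_real field_simps
        complex_norm_square[symmetric] power2_eq_square)
  have "B' $$ (i,k) = z k" if "k < n" for k
    using \<open>i < n\<close> that by (simp add: B'_def)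
  moreover have "det B' = (\<Sum>k<n. B' $$ (i,k) * cofactor B' i k)"
    by (rule laplace_expansion_row[OF B' \<open>i < n\<close>])
  ultimately have "det B' = of_real (minor_row_sum B i)"
    using B by (simp add: cofactor_B' phase minor_row_sum_def cmod_cofactor)
  then have "cmod (det B') = \<bar>minor_row_sum B i\<bar>" by (simp only: norm_of_real)
  then have "minor_row_sum B i = cmod (det B')"
    by (simp add: minor_row_sum_def sum_nonneg)
  also have "\<dots> \<le> sqrt (real n) ^ n"
    using entries by (intro cmod_det_le_if_entries_le_1[OF B']) (auto simp: B'_def z_def norm_sgn)
  finally show ?thesis .
qed

lemma compound_inf_norm_pred_le:
  assumes B: "B \<in> carrier_mat n n" and "n \<ge> 1"
    and entries: "\<And>r k. r < n \<Longrightarrow> k < n \<Longrightarrow> cmod (B $$ (r,k)) \<le> 1"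
  shows "compound_inf_norm (n - 1) B \<le> sqrt (real n) ^ n"
  unfolding compound_inf_norm_pred[OF B \<open>n \<ge> 1\<close>]
proof (rule Max.boundedI)
  show "minor_row_sum B ` {..<n} \<noteq> {}" using \<open>n \<ge> 1\<close> by (simp add: lessThan_empty_iff)
qed (use entries minor_row_sum_le[OF B] in auto)

lemma cmod_det_le_compound_inf_norm_pred:
  assumes B: "B \<in> carrier_mat n n" and "n \<ge> 1"
    and entries: "\<And>r k. r < n \<Longrightarrow> k < n \<Longrightarrow> cmod (B $$ (r,k)) \<le> 1"
  shows "cmod (det B) \<le> compound_inf_norm (n - 1) B"
proof -
  have "cmod (det B) \<le> minor_row_sum B 0"
    using \<open>n \<ge> 1\<close> entries by (intro cmod_det_le_minor_row_sum[OF B]) auto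
  also have "\<dots> \<le> compound_inf_norm (n - 1) B"
    unfolding compound_inf_norm_pred[OF B \<open>n \<ge> 1\<close>] using \<open>n \<ge> 1\<close> by (intro Max_ge) auto
  finally show ?thesis .
qed

definition fourier_mat :: "nat \<Rightarrow> complex mat" where
  "fourier_mat n = mat n n (\<lambda>(j,k). cis (2 * pi * real j / real n) ^ k)"

lemma fourier_mat_carrier: "fourier_mat n \<in> carrier_mat n n"
  unfolding fourier_mat_def by simp

lemma cmod_fourier_mat_entry: "j < n \<Longrightarrow> k < n \<Longrightarrow> cmod (fourier_mat n $$ (j,k)) = 1"
  unfolding fourier_mat_def by (simp add: norm_power)

lemma row_inner_fourier_mat:
  assumes "i < n" "j < n"
  shows "row_inner (fourier_mat n) i j = (if i = j then of_nat n else 0)"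
proof -
  define \<omega> where "\<omega> l = cis (2 * pi * real l / real n)" for l
  define q where "q = \<omega> i * cnj (\<omega> j)"
  have "row_inner (fourier_mat n) i j = (\<Sum>k<n. q ^ k)"
    using assms unfolding row_inner_def fourier_mat_def q_def \<omega>_def
    by (simp add: power_mult_distrib)
  also have "\<dots> = (if i = j then of_nat n else 0)"
  proof (cases "i = j")
    case True
    then have "q = 1" by (simp add: q_def \<omega>_def cis_cnj cis_mult)
    then show ?thesis using True by simp
  next
    case False
    have "\<omega> i \<noteq> \<omega> j"
      using bij_betw_roots_unity[of n] assms False unfolding bij_betw_def inj_on_def \<omega>_def by auto
    then have "q \<noteq> 1"
      unfolding q_def \<omega>_def by (auto simp: cis_cnj cis_mult simp flip: cis_divide)
    moreover have "\<omega> l ^ n = 1" if "l < n" for l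
      using bij_betw_roots_unity[of n] that unfolding bij_betw_def \<omega>_def by auto
    then have "q ^ n = 1"
      using assms unfolding q_def by (simp add: power_mult_distrib flip: complex_cnj_power)
    ultimately show ?thesis using False by (simp add: geometric_sum)
  qed
  finally show ?thesis .
qed

lemma cmod_det_fourier_mat: "cmod (det (fourier_mat n)) = sqrt (real n) ^ n"
proof -
  have "(cmod (det (fourier_mat n)))\<^sup>2 = (\<Prod>i<n. row_sqnorm (fourier_mat n) i)"
    by (rule cmod_det_sq_orthogonal_rows[OF fourier_mat_carrier]) (simp add: row_inner_fourier_mat)
  also have "\<dots> = (\<Prod>i<n. real n)"
  proof (rule prod.cong)
    fix i assume "i \<in> {..<n}"
    then have "of_real (row_sqnorm (fourier_mat n) i) = (of_real (real n) :: complex)"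
      using row_inner_fourier_mat[of i n i] by (simp add: row_inner_self)
    then show "row_sqnorm (fourier_mat n) i = real n" by (rule of_real_eq_iff[THEN iffD1])
  qed simp
  also have "\<dots> = real n ^ n" by simp
  also have "\<dots> = (sqrt (real n) ^ n)\<^sup>2"
    by (metis power_mult mult.commute real_sqrt_pow2 of_nat_0_le_iff)
  finally show ?thesis by (simp add: power2_eq_iff_nonneg)
qed

lemma cmod_le_col_inf_norm: "r < dim_row B \<Longrightarrow> cmod (B $$ (r,k)) \<le> col_inf_norm B k"
  unfolding col_inf_norm_def by (intro Max_ge) auto

lemma col_inf_norm_fourier_mat:
  assumes "k < n"
  shows "col_inf_norm (fourier_mat n) k = 1"
proof -
  have "(\<lambda>j. cmod (fourier_mat n $$ (j,k))) ` {0..<n} = (\<lambda>_. 1) ` {0..<n}"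
    using cmod_fourier_mat_entry[OF _ \<open>k < n\<close>] by (intro image_cong) auto
  also have "\<dots> = {1}" using \<open>k < n\<close> by (simp add: image_constant_conv)
  finally show ?thesis
    using fourier_mat_carrier[of n] unfolding col_inf_norm_def by simp
qed

theorem theorem2p11:
  fixes n :: nat
  assumes "n \<ge> 2"
  shows "sqrt (real n) ^ n \<in> theta_inf_set n (n - 1)
         \<and> (\<forall>x \<in> theta_inf_set n (n - 1). x \<le> sqrt (real n) ^ n)"
proof
  have "n \<ge> 1" using assms by simp
  let ?F = "fourier_mat n"
  note F = fourier_mat_carrier[of n]
  have entries: "cmod (?F $$ (r,k)) \<le> 1" if "r < n" "k < n" for r k
    using cmod_fourier_mat_entry[OF that] by simp
  have "compound_inf_norm (n - 1) ?F = sqrt (real n) ^ n"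
  proof (rule antisym)
    show "compound_inf_norm (n - 1) ?F \<le> sqrt (real n) ^ n"
      by (rule compound_inf_norm_pred_le[OF F \<open>n \<ge> 1\<close> entries])
    show "sqrt (real n) ^ n \<le> compound_inf_norm (n - 1) ?F"
      using cmod_det_le_compound_inf_norm_pred[OF F \<open>n \<ge> 1\<close> entries]
      unfolding cmod_det_fourier_mat .
  qed
  then show "sqrt (real n) ^ n \<in> theta_inf_set n (n - 1)"
    unfolding theta_inf_set_def using F col_inf_norm_fourier_mat[of _ n] by (intro CollectI exI[of _ ?F]) simp
  show "\<forall>x \<in> theta_inf_set n (n - 1). x \<le> sqrt (real n) ^ n"
  proof
    fix x assume "x \<in> theta_inf_set n (n - 1)"
    then obtain B where x: "x = compound_inf_norm (n - 1) B" and B: "B \<in> carrier_mat n n"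
      and cols: "\<forall>k<n. col_inf_norm B k = 1" unfolding theta_inf_set_def by auto
    have "cmod (B $$ (r,k)) \<le> 1" if "r < n" "k < n" for r k
      using cmod_le_col_inf_norm[of r B k] B cols that by simp
    then show "x \<le> sqrt (real n) ^ n"
      unfolding x by (rule compound_inf_norm_pred_le[OF B \<open>n \<ge> 1\<close>])
  qed
qed

end
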